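(* Let $\epsilon>0$ and let $\mathcal C_\epsilon$ be an extended set of extreme points. Then for any sequence $\vec b_1,\dots,\vec b_T$ of buyer valuations from the types $\vec v_1,\dots,\vec v_V$ and any menu $\vec\rho^*$ maximizing $\sum_{t=1}^T u(\vec b_t,\vec\rho)$ over all length-$\ell$ menus, $$\max_{\vec\rho\in\mathcal C_\epsilon}\sum_{t=1}^T u(\vec b_t,\vec\rho)\ \ge\ \sum_{t=1}^T u(\vec b_t,\vec\rho^* )-2K\epsilon T.$$
   Context: A length-$\ell$ menu of two-part tariffs is parameterized by $\vec\rho=(p_1^{(1)},p_2^{(1)},\dots,p_1^{(\ell)},p_2^{(\ell)})\in[0,H]^{2\ell}$. A buyer valuation $\vec v=(v(1),\dots,v(K))$ is nondecreasing in $[0,H]$ with $v(0)=0$; the buyer chooses a menu option $(j,k)$, $j\in[\ell]$, $k\in\{0,\dots,K\}$, maximizing $v(k)-\mathbf 1[k\ge1](p_1^{(j)}+kp_2^{(j)})$, and revenue $u(\vec v,\vec\rho)$ is its payment. There are finitely many known buyer types $\vec v_1,\dots,\vec v_V$. A mapping $\mu$ assigns to each type a menu option; it is feasible if some menu induces every type to choose its assigned option; $\lambda_\mu$ is the set of menus inducing $\mu$. An extended set of extreme points $\mathcal C_\epsilon$ is a set of menus such that for every feasible $\mu$ and every extreme point $\vec\rho$ of the closure of $\lambda_\mu$: if $\vec\rho\in\lambda_\mu$ then $\vec\rho\in\mathcal C_\epsilon$, and otherwise there is $\vec\rho'\in\mathcal C_\epsilon\cap\lambda_\mu$ with $\|\vec\rho-\vec\rho'\|_1\le\epsilon$.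 *)

theory Defs
  imports "HOL-Analysis.Analysis"
begin

text \<open>A length-l menu of two-part tariffs: the index type 'l has CARD('l) = l elements;
  entry j is the pair (p1^(j), p2^(j)).  Valuations are functions nat => real, v k = value of k units.\<close>

type_synonym 'l menu = "(real \<times> real) ^ 'l"
type_synonym valuation = "nat \<Rightarrow> real"

definition menus :: "real \<Rightarrow> 'l::finite menu set" where
  "menus H = {\<rho>. \<forall>j. fst (\<rho> $ j) \<in> {0..H} \<and> snd (\<rho> $ j) \<in> {0..H}}"

definition options :: "nat \<Rightarrow> ('l::finite \<times> nat) set" where
  "options K = UNIV \<times> {0..K}"

definition payment :: "'l::finite menu \<Rightarrow> 'l \<times> nat \<Rightarrow> real" where
  "payment \<rho> opt = (if snd opt = 0 then 0
      else fst (\<rho> $ fst opt) + real (snd opt) * snd (\<rho> $ fst opt))"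

definition buyer_util :: "valuation \<Rightarrow> 'l::finite menu \<Rightarrow> 'l \<times> nat \<Rightarrow> real" where
  "buyer_util v \<rho> opt = v (snd opt) - payment \<rho> opt"

definition valid_valuation :: "nat \<Rightarrow> real \<Rightarrow> valuation \<Rightarrow> bool" where
  "valid_valuation K H v \<longleftrightarrow> v 0 = 0 \<and> (\<forall>k\<in>{1..K}. v k \<in> {0..H})
     \<and> (\<forall>k1 k2. k1 \<le> k2 \<and> k2 \<le> K \<longrightarrow> v k1 \<le> v k2)"

text \<open>A buyer choice rule: for every valuation and menu it returns a utility-maximizing option
  (with an arbitrary but fixed tie-breaking).\<close>
definition valid_choice :: "nat \<Rightarrow> (valuation \<Rightarrow> 'l::finite menu \<Rightarrow> 'l \<times> nat) \<Rightarrow> bool" where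
  "valid_choice K ch \<longleftrightarrow> (\<forall>v \<rho>. ch v \<rho> \<in> options K \<and>
      (\<forall>opt\<in>options K. buyer_util v \<rho> opt \<le> buyer_util v \<rho> (ch v \<rho>)))"

definition revenue :: "(valuation \<Rightarrow> 'l::finite menu \<Rightarrow> 'l \<times> nat) \<Rightarrow> valuation \<Rightarrow> 'l menu \<Rightarrow> real" where
  "revenue ch v \<rho> = payment \<rho> (ch v \<rho>)"

definition lam :: "real \<Rightarrow> (valuation \<Rightarrow> 'l::finite menu \<Rightarrow> 'l \<times> nat) \<Rightarrow> (nat \<Rightarrow> valuation) \<Rightarrow> nat
    \<Rightarrow> (nat \<Rightarrow> 'l \<times> nat) \<Rightarrow> 'l menu set" where
  "lam H ch vt V \<mu> = {\<rho> \<in> menus H. \<forall>i<V. ch (vt i) \<rho> = \<mu> i}"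

definition feasible_map :: "real \<Rightarrow> (valuation \<Rightarrow> 'l::finite menu \<Rightarrow> 'l \<times> nat) \<Rightarrow> (nat \<Rightarrow> valuation) \<Rightarrow> nat
    \<Rightarrow> (nat \<Rightarrow> 'l \<times> nat) \<Rightarrow> bool" where
  "feasible_map H ch vt V \<mu> \<longleftrightarrow> lam H ch vt V \<mu> \<noteq> {}"

definition l1_dist :: "'l::finite menu \<Rightarrow> 'l menu \<Rightarrow> real" where
  "l1_dist \<rho> \<rho>' = (\<Sum>j\<in>UNIV. \<bar>fst (\<rho> $ j) - fst (\<rho>' $ j)\<bar> + \<bar>snd (\<rho> $ j) - snd (\<rho>' $ j)\<bar>)"

definition extended_extreme_points :: "real \<Rightarrow> (valuation \<Rightarrow> 'l::finite menu \<Rightarrow> 'l \<times> nat)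
    \<Rightarrow> (nat \<Rightarrow> valuation) \<Rightarrow> nat \<Rightarrow> real \<Rightarrow> 'l menu set \<Rightarrow> bool" where
  "extended_extreme_points H ch vt V \<epsilon> C \<longleftrightarrow> C \<subseteq> menus H \<and>
     (\<forall>\<mu>. feasible_map H ch vt V \<mu> \<longrightarrow>
        (\<forall>\<rho>. \<rho> extreme_point_of closure (lam H ch vt V \<mu>) \<longrightarrow>
           (if \<rho> \<in> lam H ch vt V \<mu> then \<rho> \<in> C
            else (\<exists>\<rho>'\<in>C \<inter> lam H ch vt V \<mu>. l1_dist \<rho> \<rho>' \<le> \<epsilon>))))"

end

theory Submission
  imports Defs
begin

text \<open>Fix the options that the optimal menu \<open>\<rho>*\<close> induces. On the region \<open>L\<close> of menus inducing
  the same options every type's choice is constant, so total revenue is a linear function of the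
  menu there. The closure of \<open>L\<close> is compact, so by Krein--Milman this linear function attains a
  value at least its value at \<open>\<rho>*\<close> at an extreme point of the closure. That extreme point either
  lies in \<open>L\<close> (and hence in \<open>C\<^sub>\<epsilon>\<close>) or has an \<open>\<epsilon>\<close>-close representative in \<open>C\<^sub>\<epsilon> \<inter> L\<close>; moving
  the menu by \<open>\<epsilon>\<close> in \<open>\<ell>\<^sub>1\<close> changes each payment for at most \<open>K\<close> units by at most \<open>K\<epsilon>\<close>. This yields the bound with
  \<open>K\<epsilon>T\<close> for every menu \<open>\<rho>*\<close>.\<close>

lemma compact_extreme_point_ge_linear:
  fixes f :: "'a::euclidean_space \<Rightarrow> real"
  assumes "compact S" "x \<in> S" "linear f"
  obtains e where "e extreme_point_of S" "f x \<le> f e"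
proof -
  let ?E = "{e. e extreme_point_of convex hull S}"
  have hull_eq: "convex hull S = convex hull ?E"
    using Krein_Milman_Minkowski[OF compact_convex_hull[OF assms(1)] convex_convex_hull] .
  have "\<exists>e\<in>?E. f x \<le> f e"
  proof (rule ccontr)
    assume "\<not> ?thesis"
    then have "?E \<subseteq> f -` {..<f x}" by auto
    then have "convex hull ?E \<subseteq> f -` {..<f x}"
      by (rule hull_minimal) (simp add: convex_linear_vimage assms(3))
    moreover have "x \<in> convex hull ?E"
      using hull_eq hull_inc[OF assms(2)] by simp
    ultimately show False by auto
  qed
  then obtain e where e: "e extreme_point_of convex hull S" "f x \<le> f e" by blast
  then have "e extreme_point_of S"
    using extreme_point_of_convex_hull[OF e(1)] hull_subset[of S convex] e(1)
    unfolding extreme_point_of_def by blast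
  with e that show thesis by blast
qed

lemma menus_subset_cbox: "menus H \<subseteq> cbox (\<chi> j. (0, 0)) (\<chi> j. (H, H))"
  by (auto simp: menus_def mem_box Basis_vec_def inner_axis Basis_prod_def inner_prod_def)

lemma bounded_menus: "bounded (menus H)"
  by (rule bounded_subset[OF bounded_cbox menus_subset_cbox])

lemma lam_subset_menus: "lam H ch vt V \<mu> \<subseteq> menus H"
  by (auto simp: lam_def)

lemma compact_closure_lam: "compact (closure (lam H ch vt V \<mu>))"
  unfolding compact_closure by (rule bounded_subset[OF bounded_menus lam_subset_menus])

lemma linear_payment: "linear (\<lambda>\<rho>. payment \<rho> opt)"
  by (rule linearI) (auto simp: payment_def algebra_simps)

lemma l1_dist_self [simp]: "l1_dist \<rho> \<rho> = 0"
  by (simp add: l1_dist_def)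

lemma l1_dist_nonneg: "0 \<le> l1_dist \<rho> \<rho>'"
  by (simp add: l1_dist_def sum_nonneg)

lemma l1_dist_component_le:
  "\<bar>fst (\<rho> $ j) - fst (\<rho>' $ j)\<bar> + \<bar>snd (\<rho> $ j) - snd (\<rho>' $ j)\<bar> \<le> l1_dist \<rho> \<rho>'"
  unfolding l1_dist_def by (rule member_le_sum) auto

lemma payment_lipschitz:
  assumes "opt \<in> options K"
  shows "\<bar>payment \<rho> opt - payment \<rho>' opt\<bar> \<le> real K * l1_dist \<rho> \<rho>'"
proof -
  obtain j k where opt: "opt = (j, k)" and "k \<le> K"
    using assms by (cases opt) (auto simp: options_def)
  define d1 where "d1 = \<bar>fst (\<rho> $ j) - fst (\<rho>' $ j)\<bar>"
  define d2 where "d2 = \<bar>snd (\<rho> $ j) - snd (\<rho>' $ j)\<bar>"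
  show ?thesis
  proof (cases "k = 0")
    case True
    then show ?thesis using opt l1_dist_nonneg[of \<rho> \<rho>'] by (simp add: payment_def)
  next
    case False
    have "\<bar>payment \<rho> opt - payment \<rho>' opt\<bar>
        = \<bar>(fst (\<rho> $ j) - fst (\<rho>' $ j)) + real k * (snd (\<rho> $ j) - snd (\<rho>' $ j))\<bar>"
      using opt False by (simp add: payment_def algebra_simps)
    also have "\<dots> \<le> d1 + real k * d2"
      unfolding d1_def d2_def by (metis abs_mult abs_of_nat abs_triangle_ineq)
    also have "\<dots> \<le> real K * (d1 + d2)"
    proof -
      have "1 \<le> real K" "real k \<le> real K"
        using False \<open>k \<le> K\<close> by auto
      then have "d1 \<le> real K * d1" "real k * d2 \<le> real K * d2"
        by (auto simp: d1_def d2_def mult_le_cancel_right1 intro: mult_right_mono)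
      then show ?thesis
        by (simp add: distrib_left)
    qed
    also have "\<dots> \<le> real K * l1_dist \<rho> \<rho>'"
      unfolding d1_def d2_def by (intro mult_left_mono l1_dist_component_le) simp
    finally show ?thesis .
  qed
qed

lemma sum_payment_lipschitz:
  assumes "\<And>t. t \<in> A \<Longrightarrow> g t \<in> options K"
  shows "(\<Sum>t\<in>A. payment \<rho> (g t)) - (\<Sum>t\<in>A. payment \<rho>' (g t))
           \<le> real K * l1_dist \<rho> \<rho>' * real (card A)"
proof -
  have "(\<Sum>t\<in>A. payment \<rho> (g t)) - (\<Sum>t\<in>A. payment \<rho>' (g t))
      = (\<Sum>t\<in>A. payment \<rho> (g t) - payment \<rho>' (g t))"
    by (simp add: sum_subtractf)
  also have "\<dots> \<le> (\<Sum>t\<in>A. real K * l1_dist \<rho> \<rho>')"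
    using payment_lipschitz[OF assms] by (intro sum_mono) (simp add: abs_le_iff)
  also have "\<dots> = real K * l1_dist \<rho> \<rho>' * real (card A)"
    by simp
  finally show ?thesis .
qed

lemma revenue_eq_payment_on_lam:
  assumes "\<rho> \<in> lam H ch vt V \<mu>" "\<rho>' \<in> lam H ch vt V \<mu>" "v \<in> vt ` {..<V}"
  shows "revenue ch v \<rho> = payment \<rho> (ch v \<rho>')"
  using assms by (auto simp: lam_def revenue_def)

lemma extended_extreme_points_near:
  assumes "extended_extreme_points H ch vt V \<epsilon> C" "0 \<le> \<epsilon>"
    and "\<rho>\<^sub>0 \<in> lam H ch vt V \<mu>" "e extreme_point_of closure (lam H ch vt V \<mu>)"
  obtains r where "r \<in> C" "r \<in> lam H ch vt V \<mu>" "l1_dist e r \<le> \<epsilon>"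
proof -
  have "feasible_map H ch vt V \<mu>"
    using assms(3) by (auto simp: feasible_map_def)
  with assms(1,4) have "if e \<in> lam H ch vt V \<mu> then e \<in> C
      else \<exists>r\<in>C \<inter> lam H ch vt V \<mu>. l1_dist e r \<le> \<epsilon>"
    unfolding extended_extreme_points_def by blast
  with assms(2) that show thesis by (cases "e \<in> lam H ch vt V \<mu>") auto
qed

theorem mainTheorem8:
  fixes ch :: "valuation \<Rightarrow> 'l::finite menu \<Rightarrow> 'l \<times> nat"
    and K :: nat and H \<epsilon> :: real and V T :: nat
    and vt b :: "nat \<Rightarrow> valuation" and C :: "'l menu set" and \<rho>star :: "'l menu"
  assumes "\<epsilon> > 0"
    and "valid_choice K ch"
    and "\<forall>i<V. valid_valuation K H (vt i)"
    and "extended_extreme_points H ch vt V \<epsilon> C"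
    and "\<forall>t\<in>{1..T}. b t \<in> vt ` {..<V}"
    and "\<rho>star \<in> menus H"
    and "\<forall>\<rho>\<in>menus H. (\<Sum>t=1..T. revenue ch (b t) \<rho>) \<le> (\<Sum>t=1..T. revenue ch (b t) \<rho>star)"
  shows "\<exists>\<rho>\<in>C. (\<Sum>t=1..T. revenue ch (b t) \<rho>)
            \<ge> (\<Sum>t=1..T. revenue ch (b t) \<rho>star) - 2 * real K * \<epsilon> * real T"
proof -
  define L where "L = lam H ch vt V (\<lambda>i. ch (vt i) \<rho>star)"
  define f where "f \<rho> = (\<Sum>t=1..T. payment \<rho> (ch (b t) \<rho>star))" for \<rho>
  have star_L: "\<rho>star \<in> L"
    using assms(6) by (simp add: L_def lam_def)
  have revenue_L: "(\<Sum>t=1..T. revenue ch (b t) \<rho>) = f \<rho>" if "\<rho> \<in> L" for \<rho>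
    unfolding f_def L_def
    using revenue_eq_payment_on_lam[OF that[unfolded L_def] star_L[unfolded L_def]] assms(5)
    by (intro sum.cong) auto
  have "linear f"
    unfolding f_def by (intro linear_compose_sum ballI linear_payment)
  moreover have "compact (closure L)"
    unfolding L_def by (rule compact_closure_lam)
  moreover have "\<rho>star \<in> closure L"
    using star_L closure_subset by blast
  ultimately obtain e where e: "e extreme_point_of closure L" "f \<rho>star \<le> f e"
    using compact_extreme_point_ge_linear by metis
  then obtain r where r: "r \<in> C" "r \<in> L" "l1_dist e r \<le> \<epsilon>"
    using extended_extreme_points_near[OF assms(4) _ star_L[unfolded L_def]] assms(1)
    unfolding L_def by force
  have "f e - f r \<le> real K * l1_dist e r * real T"
    using sum_payment_lipschitz[of "{1..T}" "\<lambda>t. ch (b t) \<rho>star" K e r] assms(2)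
    unfolding f_def valid_choice_def by auto
  also have "\<dots> \<le> real K * (2 * \<epsilon>) * real T"
    using r(3) assms(1) by (intro mult_right_mono mult_left_mono) auto
  finally have "f e - f r \<le> 2 * real K * \<epsilon> * real T"
    by simp
  then show ?thesis
    using e(2) r revenue_L star_L by (intro bexI[of _ r]) auto
qed

end
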